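(* Let $\Phi:\mathbb{R}\to\mathbb{R}$ be smooth, $\sigma\in\mathbb{R}$, and let $R,V\in C^1(\mathbb{R})\cap L^\infty(\mathbb{R})$ with $R(\varphi)\to r_\pm$ and $V(\varphi)\to v_\pm$ as $\varphi\to\pm\infty$ solve $$\sigma R'(\varphi)+V(\varphi+1)-V(\varphi)=0,\qquad \sigma V'(\varphi)+\Phi'(R(\varphi))-\Phi'(R(\varphi-1))=0\quad(\varphi\in\mathbb{R}).$$ Then $$\sigma[\![r]\!]+[\![v]\!]=0,\qquad \sigma[\![v]\!]+[\![\Phi'(r)]\!]=0,\qquad \sigma[\![\tfrac12 v^2+\Phi(r)]\!]+[\![\Phi'(r)v]\!]=0.$$
   Context: For an observable $\psi(r,v)$, $[\![\psi]\!]:=\psi(r_+,v_+)-\psi(r_-,v_-)$; e.g. $[\![r]\!]=r_+-r_-$, $[\![\Phi'(r)v]\!]=\Phi'(r_+)v_+-\Phi'(r_-)v_-$. *)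

theory Defs
  imports "HOL-Analysis.Analysis"
begin

definition smooth_real :: "(real \<Rightarrow> real) \<Rightarrow> bool" where
  "smooth_real f \<longleftrightarrow> (\<forall>n x. ((deriv ^^ n) f) differentiable (at x))"

definition C1_real :: "(real \<Rightarrow> real) \<Rightarrow> bool" where
  "C1_real f \<longleftrightarrow> (\<forall>x. f differentiable (at x)) \<and> continuous_on UNIV (deriv f)"

end

theory Submission
  imports Defs "HOL-Real_Asymp.Real_Asymp"
begin

text \<open>Each of the three equations has the form of a discrete conservation law
  \<open>\<sigma> u' + f(\<phi> + 1) - f(\<phi>) = 0\<close>: for mass \<open>u = R, f = V\<close>, for momentum
  \<open>u = V, f(\<phi>) = \<Phi>'(R(\<phi> - 1))\<close>, and, multiplying the two equations by \<open>\<Phi>'(R)\<close> and \<open>V\<close>,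
  for energy \<open>u = V\<^sup>2/2 + \<Phi>(R), f(\<phi>) = \<Phi>'(R(\<phi> - 1)) V(\<phi>)\<close>. If \<open>K\<close> is a primitive of \<open>f\<close>,
  then \<open>\<sigma> u(\<phi>) + K(\<phi> + 1) - K(\<phi>)\<close> has derivative zero, hence is constant; by the mean value
  theorem \<open>K(\<phi> + 1) - K(\<phi>)\<close> tends to the limits of \<open>f\<close> at \<open>\<plusminus>\<infinity>\<close>, and comparing the two ends
  gives the jump condition \<open>\<sigma>[u] + [f] = 0\<close>.\<close>

lemma C1_real_has_real_derivative:
  "C1_real f \<Longrightarrow> (f has_real_derivative deriv f x) (at x)"
  by (simp add: C1_real_def DERIV_deriv_iff_real_differentiable)

lemma C1_real_continuous_on: "C1_real f \<Longrightarrow> continuous_on UNIV f"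
  by (auto simp: C1_real_def continuous_on_eq_continuous_at differentiable_imp_continuous_within)

lemma smooth_real_deriv: "smooth_real f \<Longrightarrow> smooth_real (deriv f)"
  unfolding smooth_real_def by (metis funpow_Suc_right o_apply)

lemma smooth_real_imp_C1_real: "smooth_real f \<Longrightarrow> C1_real f"
  unfolding C1_real_def continuous_on_eq_continuous_at[OF open_UNIV]
  using smooth_real_deriv[of f]
  by (metis smooth_real_def funpow_0 differentiable_imp_continuous_within)

lemma tendsto_shift_at_top:
  fixes f :: "real \<Rightarrow> 'a::topological_space"
  assumes "(f \<longlongrightarrow> l) at_top"
  shows "((\<lambda>x. f (x + c)) \<longlongrightarrow> l) at_top"
proof -
  have "filterlim (\<lambda>x::real. x + c) at_top at_top" by real_asymp
  then show ?thesis using filterlim_compose[OF assms] by blast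
qed

lemma tendsto_shift_at_bot:
  fixes f :: "real \<Rightarrow> 'a::topological_space"
  assumes "(f \<longlongrightarrow> l) at_bot"
  shows "((\<lambda>x. f (x + c)) \<longlongrightarrow> l) at_bot"
proof -
  have "filterlim (\<lambda>x::real. x + c) at_bot at_bot" by real_asymp
  then show ?thesis using filterlim_compose[OF assms] by blast
qed

lemma filterlim_within_unit_step:
  fixes \<xi> :: "real \<Rightarrow> real"
  assumes "\<And>x. x \<le> \<xi> x \<and> \<xi> x \<le> x + 1" and "F = at_top \<or> F = at_bot"
  shows "filterlim \<xi> F F"
  using assms(2)
proof
  assume "F = at_top"
  then show ?thesis
    using filterlim_at_top_mono[OF filterlim_ident, of \<xi>] assms(1) by simp
next
  assume "F = at_bot"
  moreover have "filterlim (\<lambda>x::real. x + 1) at_bot at_bot" by real_asymp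
  ultimately show ?thesis
    using filterlim_at_bot_mono[of "\<lambda>x. x + 1", of _ \<xi>] assms(1) by simp
qed

lemma tendsto_unit_difference_of_derivative:
  fixes K k :: "real \<Rightarrow> real"
  assumes K: "\<And>x. (K has_real_derivative k x) (at x)"
    and lim: "(k \<longlongrightarrow> c) F" and F: "F = at_top \<or> F = at_bot"
  shows "((\<lambda>x. K (x + 1) - K x) \<longlongrightarrow> c) F"
proof -
  have "\<exists>z. x < z \<and> z < x + 1 \<and> K (x + 1) - K x = k z" for x
    using MVT2[of x "x + 1" K k] K by auto
  then obtain \<xi> where \<xi>: "\<And>x. x < \<xi> x \<and> \<xi> x < x + 1 \<and> K (x + 1) - K x = k (\<xi> x)"
    by metis
  have "filterlim \<xi> F F"
    using \<xi> F by (intro filterlim_within_unit_step) (auto simp: less_imp_le)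
  then have "((\<lambda>x. k (\<xi> x)) \<longlongrightarrow> c) F"
    using filterlim_compose[OF lim] by blast
  then show ?thesis using \<xi> by simp
qed

lemma jump_condition:
  fixes u u' f :: "real \<Rightarrow> real"
  assumes du: "\<And>x. (u has_real_derivative u' x) (at x)"
    and law: "\<And>x. \<sigma> * u' x + f (x + 1) - f x = 0"
    and cf: "continuous_on UNIV f"
    and "(u \<longlongrightarrow> u_p) at_top" and "(u \<longlongrightarrow> u_m) at_bot"
    and "(f \<longlongrightarrow> f_p) at_top" and "(f \<longlongrightarrow> f_m) at_bot"
  shows "\<sigma> * (u_p - u_m) + (f_p - f_m) = 0"
proof -
  obtain K where K: "\<And>x. (K has_real_derivative f x) (at x)"
    using einterval_antiderivative[of "-\<infinity>" "\<infinity>" f] cf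
    by (auto simp: continuous_on_eq_continuous_at has_real_derivative_iff_has_vector_derivative)
  define M where "M x = \<sigma> * u x + (K (x + 1) - K x)" for x
  have "(M has_real_derivative \<sigma> * u' x + (f (x + 1) * 1 - f x)) (at x)" for x
    unfolding M_def
    by (intro DERIV_add DERIV_diff DERIV_cmult du K DERIV_chain2[OF K])
       (auto intro!: derivative_eq_intros)
  then have M_const: "M = (\<lambda>_. M 0)"
    using DERIV_isconst_all[of M] law by (metis add_diff_eq mult_1_right)
  have "(M \<longlongrightarrow> \<sigma> * u_p + f_p) at_top"
    unfolding M_def using assms(4,6)
    by (intro tendsto_intros tendsto_unit_difference_of_derivative[OF K]) simp_all
  then have top: "M 0 = \<sigma> * u_p + f_p"
    by (subst (asm) M_const) (simp add: tendsto_const_iff)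
  have "(M \<longlongrightarrow> \<sigma> * u_m + f_m) at_bot"
    unfolding M_def using assms(5,7)
    by (intro tendsto_intros tendsto_unit_difference_of_derivative[OF K]) simp_all
  then have bot: "M 0 = \<sigma> * u_m + f_m"
    by (subst (asm) M_const) (simp add: tendsto_const_iff)
  from top bot show ?thesis by (simp add: algebra_simps)
qed

lemma shifted_composition_limits:
  fixes p R :: "real \<Rightarrow> real"
  assumes cp: "continuous_on UNIV p" and cR: "continuous_on UNIV R"
    and R_p: "(R \<longlongrightarrow> r_p) at_top" and R_m: "(R \<longlongrightarrow> r_m) at_bot"
  shows "continuous_on UNIV (\<lambda>x. p (R (x - 1)))"
    and "((\<lambda>x. p (R (x - 1))) \<longlongrightarrow> p r_p) at_top"
    and "((\<lambda>x. p (R (x - 1))) \<longlongrightarrow> p r_m) at_bot"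
proof -
  show "continuous_on UNIV (\<lambda>x. p (R (x - 1)))"
    by (intro continuous_on_compose2[OF cp] continuous_on_compose2[OF cR] continuous_intros) auto
  show "((\<lambda>x. p (R (x - 1))) \<longlongrightarrow> p r_p) at_top"
    using continuous_on_tendsto_compose[OF cp tendsto_shift_at_top[OF R_p, of "-1"]] by simp
  show "((\<lambda>x. p (R (x - 1))) \<longlongrightarrow> p r_m) at_bot"
    using continuous_on_tendsto_compose[OF cp tendsto_shift_at_bot[OF R_m, of "-1"]] by simp
qed

lemma energy_jump_condition:
  fixes P p R V R' V' :: "real \<Rightarrow> real"
  assumes dP: "\<And>x. (P has_real_derivative p x) (at x)" and cp: "continuous_on UNIV p"
    and dR: "\<And>x. (R has_real_derivative R' x) (at x)" and cR: "continuous_on UNIV R"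
    and dV: "\<And>x. (V has_real_derivative V' x) (at x)" and cV: "continuous_on UNIV V"
    and R_p: "(R \<longlongrightarrow> r_p) at_top" and R_m: "(R \<longlongrightarrow> r_m) at_bot"
    and V_p: "(V \<longlongrightarrow> v_p) at_top" and V_m: "(V \<longlongrightarrow> v_m) at_bot"
    and mass: "\<And>x. \<sigma> * R' x + V (x + 1) - V x = 0"
    and momentum: "\<And>x. \<sigma> * V' x + p (R x) - p (R (x - 1)) = 0"
  shows "\<sigma> * ((v_p^2 / 2 + P r_p) - (v_m^2 / 2 + P r_m)) + (p r_p * v_p - p r_m * v_m) = 0"
proof (rule jump_condition[where f = "\<lambda>x. p (R (x - 1)) * V x"])
  note flux = shifted_composition_limits[OF cp cR R_p R_m]
  have cP: "continuous_on UNIV P"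
    using dP by (auto simp: continuous_on_eq_continuous_at intro: DERIV_isCont)
  show "((\<lambda>x. V x^2 / 2 + P (R x)) has_real_derivative
      V x * V' x + p (R x) * R' x) (at x)" for x
    by (rule derivative_eq_intros dR dV DERIV_chain2[OF dP dR] | simp)+
  show "\<sigma> * (V x * V' x + p (R x) * R' x) + p (R (x + 1 - 1)) * V (x + 1) - p (R (x - 1)) * V x = 0"
    for x
  proof -
    have R'_eq: "\<sigma> * R' x = V x - V (x + 1)" and V'_eq: "\<sigma> * V' x = p (R (x - 1)) - p (R x)"
      using mass[of x] momentum[of x] by linarith+
    have "\<sigma> * (V x * V' x + p (R x) * R' x) = V x * (\<sigma> * V' x) + p (R x) * (\<sigma> * R' x)"
      by (simp add: algebra_simps)
    also have "\<dots> = V x * (p (R (x - 1)) - p (R x)) + p (R x) * (V x - V (x + 1))"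
      by (simp only: R'_eq V'_eq)
    finally show ?thesis by (simp add: algebra_simps)
  qed
  show "continuous_on UNIV (\<lambda>x. p (R (x - 1)) * V x)"
    by (intro continuous_intros flux(1) cV)
  show "((\<lambda>x. V x^2 / 2 + P (R x)) \<longlongrightarrow> v_p^2 / 2 + P r_p) at_top"
    "((\<lambda>x. V x^2 / 2 + P (R x)) \<longlongrightarrow> v_m^2 / 2 + P r_m) at_bot"
    by (intro tendsto_intros V_p V_m continuous_on_tendsto_compose[OF cP R_p]
        continuous_on_tendsto_compose[OF cP R_m]; simp)+
  show "((\<lambda>x. p (R (x - 1)) * V x) \<longlongrightarrow> p r_p * v_p) at_top"
    "((\<lambda>x. p (R (x - 1)) * V x) \<longlongrightarrow> p r_m * v_m) at_bot"
    by (intro tendsto_intros flux(2,3) V_p V_m)+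
qed

theorem lemma2p1:
  fixes \<Phi> R V :: "real \<Rightarrow> real" and \<sigma> r_p r_m v_p v_m :: real
  assumes "smooth_real \<Phi>"
    and "C1_real R" and "bounded (range R)"
    and "C1_real V" and "bounded (range V)"
    and "(R \<longlongrightarrow> r_p) at_top" and "(R \<longlongrightarrow> r_m) at_bot"
    and "(V \<longlongrightarrow> v_p) at_top" and "(V \<longlongrightarrow> v_m) at_bot"
    and "\<And>\<phi>. \<sigma> * deriv R \<phi> + V (\<phi> + 1) - V \<phi> = 0"
    and "\<And>\<phi>. \<sigma> * deriv V \<phi> + deriv \<Phi> (R \<phi>) - deriv \<Phi> (R (\<phi> - 1)) = 0"
  shows "\<sigma> * (r_p - r_m) + (v_p - v_m) = 0 \<and>
           \<sigma> * (v_p - v_m) + (deriv \<Phi> r_p - deriv \<Phi> r_m) = 0 \<and>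
           \<sigma> * ((v_p^2 / 2 + \<Phi> r_p) - (v_m^2 / 2 + \<Phi> r_m))
           + (deriv \<Phi> r_p * v_p - deriv \<Phi> r_m * v_m) = 0"
proof -
  have dR: "\<And>x. (R has_real_derivative deriv R x) (at x)"
    and dV: "\<And>x. (V has_real_derivative deriv V x) (at x)"
    and d\<Phi>: "\<And>x. (\<Phi> has_real_derivative deriv \<Phi> x) (at x)"
    using assms(1,2,4) smooth_real_imp_C1_real C1_real_has_real_derivative by blast+
  have cR: "continuous_on UNIV R" and cV: "continuous_on UNIV V"
    and cd\<Phi>: "continuous_on UNIV (deriv \<Phi>)"
    using assms(1,2,4) smooth_real_deriv smooth_real_imp_C1_real C1_real_continuous_on by blast+
  note flux = shifted_composition_limits[OF cd\<Phi> cR assms(6,7)]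
  have "\<sigma> * (r_p - r_m) + (v_p - v_m) = 0"
    by (rule jump_condition[OF dR assms(10) cV assms(6-9)])
  moreover have "\<sigma> * (v_p - v_m) + (deriv \<Phi> r_p - deriv \<Phi> r_m) = 0"
    by (rule jump_condition[OF dV _ flux(1) assms(8,9) flux(2,3)]) (use assms(11) in simp)
  moreover have "\<sigma> * ((v_p^2 / 2 + \<Phi> r_p) - (v_m^2 / 2 + \<Phi> r_m))
      + (deriv \<Phi> r_p * v_p - deriv \<Phi> r_m * v_m) = 0"
    by (rule energy_jump_condition[where p = "deriv \<Phi>" and R' = "deriv R" and V' = "deriv V",
          OF d\<Phi> cd\<Phi> dR cR dV cV assms(6-11)])
  ultimately show ?thesis by blast
qed

end
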